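(* For any $\mathsf{F_{<:}^\top}$ term-in-context $\Theta\vdash^\top t$, if $\Theta\vdash_M t:T$ then $T$ is a minimal type for $\mathsf{F_{<:}^\top}$.
   Context: System $\mathsf{F_{<:}^{K\top}}$: raw types $T ::= \top \mid X \mid T\to T \mid \forall^{\mathsf K}(X<:T).T \mid \forall^\top(X<:T).T$, up to $\alpha$-conversion. Contexts $\Theta$: finite sequences of $X<:T$ or $x:T$ with distinct variables, each type well-formed over the preceding part. Subtyping $\Theta\vdash S<:T$: (Var) $\Theta,X<:T,\Theta'\vdash X<:T$; (Top) $T<:\top$; (Refl); (Trans); ($\to$) from $S'<:S$, $T<:T'$ infer $S\to T<:S'\to T'$; ($\forall$-Fun) from $\Theta,X<:S\vdash T<:T'$ infer $\forall^{\mathsf K}(X<:S).T<:\forall^{\mathsf K}(X<:S).T'$; ($\forall$-Loc) from $\Theta\vdash T_0<:S_0$, $\Theta,X<:S_0\vdash S_1<:T_1$ infer $\forall^{\mathsf K}(X<:S_0).S_1<:\forall^\top(X<:T_0).T_1$; ($\forall$-Top) from $\Theta\vdash T_0<:S_0$, $\Theta,X<:\top\vdash S_1<:T_1$ infer $\forall^\top(X<:S_0).S_1<:\forall^\top(X<:T_0).T_1$. Raw terms $t ::= \mathsf{top}\mid x\mid\lambda(x:T).t\mid\Lambda(X<:T).t\mid t\,t\mid t\{T\}$. $\Theta^*(T)=\Theta^*(S)$ if $T\equiv X$ and $X<:S$ occurs in $\Theta$; $\Theta^*(T)=T$ otherwise. Minimal typing $\Theta\vdash_M t:T$: $\Theta,x:T,\Theta'\vdash_M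 x:T$; $\Theta\vdash_M\mathsf{top}:\top$; from $\Theta,x:S\vdash_M t:T$ infer $\Theta\vdash_M\lambda(x:S).t:S\to T$; from $\Theta\vdash_M r:R$, $\Theta\vdash_M s:S$, $\Theta\vdash S<:S'$ with $\Theta^*(R)=S'\to T$ infer $\Theta\vdash_M r\,s:T$; from $\Theta,X<:S\vdash_M t:T$ infer $\Theta\vdash_M\Lambda(X<:S).t:\forall^{\mathsf K}(X<:S).T$; from $\Theta\vdash_M r:R$, $\Theta\vdash S<:S'$ with $\Theta^*(R)=\forall^{\mathsf K}(X<:S').T$ or $\forall^\top(X<:S').T$ infer $\Theta\vdash_M r\{S\}:T[S/X]$. An $\mathsf{F_{<:}^\top}$ type is one containing only $\forall^\top$ quantifiers; an $\mathsf{F_{<:}^\top}$ term-in-context has context and type annotations consisting of $\mathsf{F_{<:}^\top}$ types. The minimal types for $\mathsf{F_{<:}^\top}$ are the $\mathsf{F_{<:}^{K\top}}$ types generated by $T ::= S \mid \forall^{\mathsf K}(X<:S).T \mid S\to T$, where $S$ ranges over $\mathsf{F_{<:}^\top}$ types. *)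

theory Defs
  imports Main
begin

text \<open>System F-sub with two kinds of quantifiers, in locally de Bruijn style
(types and terms up to alpha-conversion), following the POPLmark Isabelle
formalisation: one environment list, term and type variables share the index space;
index 0 refers to the most recent binding (head of the list).\<close>

datatype qkind = QK | QTop   \<comment> \<open>QK = forall^K (kernel), QTop = forall^top\<close>

datatype type =
    Top
  | TVar nat
  | Fun type type
  | All qkind type type   \<comment> \<open>All k S T = forall^k (X <: S). T, X bound as index 0 in T\<close>

datatype binding = VarB type | TVarB type

type_synonym env = "binding list"

datatype trm =
    TopT
  | Var nat
  | Abs type trm
  | TAbs type trm
  | App trm trm
  | TApp trm type

primrec shift :: "nat \<Rightarrow> nat \<Rightarrow> type \<Rightarrow> type" where
  "shift n k Top = Top"
| "shift n k (TVar i) = (if i < k then TVar i else TVar (i + n))"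
| "shift n k (Fun S T) = Fun (shift n k S) (shift n k T)"
| "shift n k (All q S T) = All q (shift n k S) (shift n (Suc k) T)"

primrec unshift :: "nat \<Rightarrow> nat \<Rightarrow> type \<Rightarrow> type" where
  "unshift n k Top = Top"
| "unshift n k (TVar i) = (if i < k then TVar i else TVar (i - n))"
| "unshift n k (Fun S T) = Fun (unshift n k S) (unshift n k T)"
| "unshift n k (All q S T) = All q (unshift n k S) (unshift n (Suc k) T)"

primrec subst :: "nat \<Rightarrow> type \<Rightarrow> type \<Rightarrow> type" where
  "subst k S Top = Top"
| "subst k S (TVar i) =
     (if k < i then TVar (i - 1) else if i = k then shift k 0 S else TVar i)"
| "subst k S (Fun T1 T2) = Fun (subst k S T1) (subst k S T2)"
| "subst k S (All q T1 T2) = All q (subst k S T1) (subst (Suc k) S T2)"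

primrec type_of_binding :: "binding \<Rightarrow> type" where
  "type_of_binding (VarB T) = T"
| "type_of_binding (TVarB T) = T"

primrec wf_type :: "env \<Rightarrow> type \<Rightarrow> bool" where
  "wf_type \<Gamma> Top = True"
| "wf_type \<Gamma> (TVar i) = (i < length \<Gamma> \<and> (\<exists>U. \<Gamma> ! i = TVarB U))"
| "wf_type \<Gamma> (Fun S T) = (wf_type \<Gamma> S \<and> wf_type \<Gamma> T)"
| "wf_type \<Gamma> (All q S T) = (wf_type \<Gamma> S \<and> wf_type (TVarB S # \<Gamma>) T)"

primrec wf_env :: "env \<Rightarrow> bool" where
  "wf_env [] = True"
| "wf_env (b # \<Gamma>) = (wf_env \<Gamma> \<and> wf_type \<Gamma> (type_of_binding b))"

primrec wf_trm :: "env \<Rightarrow> trm \<Rightarrow> bool" where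
  "wf_trm \<Gamma> TopT = True"
| "wf_trm \<Gamma> (Var i) = (i < length \<Gamma> \<and> (\<exists>U. \<Gamma> ! i = VarB U))"
| "wf_trm \<Gamma> (Abs S t) = (wf_type \<Gamma> S \<and> wf_trm (VarB S # \<Gamma>) t)"
| "wf_trm \<Gamma> (TAbs S t) = (wf_type \<Gamma> S \<and> wf_trm (TVarB S # \<Gamma>) t)"
| "wf_trm \<Gamma> (App r s) = (wf_trm \<Gamma> r \<and> wf_trm \<Gamma> s)"
| "wf_trm \<Gamma> (TApp r S) = (wf_trm \<Gamma> r \<and> wf_type \<Gamma> S)"

primrec ftop_type :: "type \<Rightarrow> bool" where
  "ftop_type Top = True"
| "ftop_type (TVar i) = True"
| "ftop_type (Fun S T) = (ftop_type S \<and> ftop_type T)"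
| "ftop_type (All q S T) = (q = QTop \<and> ftop_type S \<and> ftop_type T)"

primrec ftop_trm :: "trm \<Rightarrow> bool" where
  "ftop_trm TopT = True"
| "ftop_trm (Var i) = True"
| "ftop_trm (Abs S t) = (ftop_type S \<and> ftop_trm t)"
| "ftop_trm (TAbs S t) = (ftop_type S \<and> ftop_trm t)"
| "ftop_trm (App r s) = (ftop_trm r \<and> ftop_trm s)"
| "ftop_trm (TApp r S) = (ftop_trm r \<and> ftop_type S)"

definition ftop_term_in_context :: "env \<Rightarrow> trm \<Rightarrow> bool" where
  "ftop_term_in_context \<Gamma> t \<longleftrightarrow>
     wf_env \<Gamma> \<and> wf_trm \<Gamma> t \<and>
     (\<forall>b \<in> set \<Gamma>. ftop_type (type_of_binding b)) \<and> ftop_trm t"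

inductive min_type_ftop :: "type \<Rightarrow> bool" where
  mt_base: "ftop_type S \<Longrightarrow> min_type_ftop S"
| mt_all:  "ftop_type S \<Longrightarrow> min_type_ftop T \<Longrightarrow> min_type_ftop (All QK S T)"
| mt_fun:  "ftop_type S \<Longrightarrow> min_type_ftop T \<Longrightarrow> min_type_ftop (Fun S T)"

text \<open>Theta^*(T): repeatedly replace a type variable by its bound.\<close>
fun expose :: "env \<Rightarrow> type \<Rightarrow> type" where
  "expose [] T = T"
| "expose (b # \<Gamma>) T =
     (case T of
        TVar 0 \<Rightarrow> (case b of TVarB S \<Rightarrow> shift 1 0 (expose \<Gamma> S) | VarB _ \<Rightarrow> T)
      | TVar (Suc i) \<Rightarrow> shift 1 0 (expose \<Gamma> (TVar i))
      | _ \<Rightarrow> T)"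

inductive subtype :: "env \<Rightarrow> type \<Rightarrow> type \<Rightarrow> bool" ("_ \<turnstile> _ <: _" [50,50,50] 50) where
  S_Var:  "i < length \<Gamma> \<Longrightarrow> \<Gamma> ! i = TVarB T \<Longrightarrow> \<Gamma> \<turnstile> TVar i <: shift (Suc i) 0 T"
| S_Top:  "\<Gamma> \<turnstile> T <: Top"
| S_Refl: "\<Gamma> \<turnstile> T <: T"
| S_Trans: "\<Gamma> \<turnstile> S <: U \<Longrightarrow> \<Gamma> \<turnstile> U <: T \<Longrightarrow> \<Gamma> \<turnstile> S <: T"
| S_Fun:  "\<Gamma> \<turnstile> S' <: S \<Longrightarrow> \<Gamma> \<turnstile> T <: T' \<Longrightarrow> \<Gamma> \<turnstile> Fun S T <: Fun S' T'"
| S_AllFun: "TVarB S # \<Gamma> \<turnstile> T <: T' \<Longrightarrow> \<Gamma> \<turnstile> All QK S T <: All QK S T'"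
| S_AllLoc: "\<Gamma> \<turnstile> T0 <: S0 \<Longrightarrow> TVarB S0 # \<Gamma> \<turnstile> S1 <: T1 \<Longrightarrow>
             \<Gamma> \<turnstile> All QK S0 S1 <: All QTop T0 T1"
| S_AllTop: "\<Gamma> \<turnstile> T0 <: S0 \<Longrightarrow> TVarB Top # \<Gamma> \<turnstile> S1 <: T1 \<Longrightarrow>
             \<Gamma> \<turnstile> All QTop S0 S1 <: All QTop T0 T1"

text \<open>Minimal typing.  A term-variable binding occupies an index, so the
result type of an abstraction is shifted back down (POPLmark convention).\<close>
inductive mtyping :: "env \<Rightarrow> trm \<Rightarrow> type \<Rightarrow> bool" ("_ \<turnstile>\<^sub>M _ : _" [50,50,50] 50) where
  M_Var: "i < length \<Gamma> \<Longrightarrow> \<Gamma> ! i = VarB T \<Longrightarrow> \<Gamma> \<turnstile>\<^sub>M Var i : shift (Suc i) 0 T"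
| M_Top: "\<Gamma> \<turnstile>\<^sub>M TopT : Top"
| M_Abs: "VarB S # \<Gamma> \<turnstile>\<^sub>M t : T \<Longrightarrow> \<Gamma> \<turnstile>\<^sub>M Abs S t : Fun S (unshift 1 0 T)"
| M_App: "\<Gamma> \<turnstile>\<^sub>M r : R \<Longrightarrow> \<Gamma> \<turnstile>\<^sub>M s : S \<Longrightarrow> \<Gamma> \<turnstile> S <: S' \<Longrightarrow>
          expose \<Gamma> R = Fun S' T \<Longrightarrow> \<Gamma> \<turnstile>\<^sub>M App r s : T"
| M_TAbs: "TVarB S # \<Gamma> \<turnstile>\<^sub>M t : T \<Longrightarrow> \<Gamma> \<turnstile>\<^sub>M TAbs S t : All QK S T"
| M_TApp: "\<Gamma> \<turnstile>\<^sub>M r : R \<Longrightarrow> \<Gamma> \<turnstile> S <: S' \<Longrightarrow>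
           expose \<Gamma> R = All q S' T \<Longrightarrow> \<Gamma> \<turnstile>\<^sub>M TApp r S : subst 0 S T"

end

theory Submission
  imports Defs
begin

text \<open>Only the rule for type
abstraction creates a \<open>\<forall>\<^sup>K\<close>, and it does so in front of the (minimal) type of
the body with an annotation as bound. All other types stem from the context and
the annotations, which are \<open>F\<^sub><:\<^sup>\<top>\<close> types, and this class is closed
under shifting, substitution and exposure of type variables. The elimination
rules only strip the outermost arrow or quantifier of a minimal type, and what
remains is again minimal.\<close>

definition ftop_env :: "env \<Rightarrow> bool" where
  "ftop_env \<Gamma> \<longleftrightarrow> (\<forall>b \<in> set \<Gamma>. ftop_type (type_of_binding b))"

lemma ftop_env_Cons [simp]:
  "ftop_env (b # \<Gamma>) \<longleftrightarrow> ftop_type (type_of_binding b) \<and> ftop_env \<Gamma>"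
  by (simp add: ftop_env_def)

lemma ftop_env_nth: "ftop_env \<Gamma> \<Longrightarrow> i < length \<Gamma> \<Longrightarrow> ftop_type (type_of_binding (\<Gamma> ! i))"
  by (simp add: ftop_env_def)

lemma ftop_type_shift: "ftop_type T \<Longrightarrow> ftop_type (shift n k T)"
  by (induction T arbitrary: k) auto

lemma ftop_type_unshift: "ftop_type T \<Longrightarrow> ftop_type (unshift n k T)"
  by (induction T arbitrary: k) auto

lemma ftop_type_subst: "ftop_type S \<Longrightarrow> ftop_type T \<Longrightarrow> ftop_type (subst k S T)"
  by (induction T arbitrary: k) (auto simp: ftop_type_shift)

lemma ftop_type_expose: "ftop_env \<Gamma> \<Longrightarrow> ftop_type T \<Longrightarrow> ftop_type (expose \<Gamma> T)"
  by (induction \<Gamma> T rule: expose.induct)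
    (auto split: type.split nat.split binding.split intro: ftop_type_shift)

lemma expose_non_TVar: "(\<And>i. T \<noteq> TVar i) \<Longrightarrow> expose \<Gamma> T = T"
  by (cases \<Gamma>) (auto split: type.split)

lemma min_type_ftop_unshift: "min_type_ftop T \<Longrightarrow> min_type_ftop (unshift n k T)"
  by (induction T arbitrary: k rule: min_type_ftop.induct)
    (auto intro: min_type_ftop.intros ftop_type_unshift)

lemma min_type_ftop_subst:
  "min_type_ftop T \<Longrightarrow> ftop_type S \<Longrightarrow> min_type_ftop (subst k S T)"
  by (induction T arbitrary: k rule: min_type_ftop.induct)
    (auto intro: min_type_ftop.intros ftop_type_subst)

lemma min_type_ftop_expose: "ftop_env \<Gamma> \<Longrightarrow> min_type_ftop T \<Longrightarrow> min_type_ftop (expose \<Gamma> T)"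
proof (cases "\<exists>i. T = TVar i")
  case True
  then obtain i where "T = TVar i" by blast
  moreover assume "ftop_env \<Gamma>"
  ultimately show ?thesis
    using ftop_type_expose[of \<Gamma> "TVar i"] by (simp add: mt_base)
qed (simp add: expose_non_TVar)

lemma min_type_ftop_Fun_range: "min_type_ftop (Fun S T) \<Longrightarrow> min_type_ftop T"
  by (cases rule: min_type_ftop.cases) (auto intro: mt_base)

lemma min_type_ftop_All_body: "min_type_ftop (All q S T) \<Longrightarrow> min_type_ftop T"
  by (cases rule: min_type_ftop.cases) (auto intro: mt_base)

lemma mtyping_min_type_ftop:
  assumes "\<Gamma> \<turnstile>\<^sub>M t : T" and "ftop_env \<Gamma>" and "ftop_trm t"
  shows "min_type_ftop T"
  using assms
proof (induction rule: mtyping.induct)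
  case (M_Var i \<Gamma> T)
  then have "ftop_type T" using ftop_env_nth by fastforce
  then show ?case by (intro mt_base ftop_type_shift)
next
  case M_Top
  show ?case by (simp add: mt_base)
next
  case (M_Abs S \<Gamma> t T)
  then show ?case by (simp add: mt_fun min_type_ftop_unshift)
next
  case (M_App \<Gamma> r R s S S' T)
  then have "min_type_ftop R" by simp
  with \<open>ftop_env \<Gamma>\<close> have "min_type_ftop (expose \<Gamma> R)" by (rule min_type_ftop_expose)
  with \<open>expose \<Gamma> R = Fun S' T\<close> show ?case by (simp add: min_type_ftop_Fun_range)
next
  case (M_TAbs S \<Gamma> t T)
  then show ?case by (simp add: mt_all)
next
  case (M_TApp \<Gamma> r R S S' q T)
  then have "min_type_ftop R" by simp
  with \<open>ftop_env \<Gamma>\<close> have "min_type_ftop (expose \<Gamma> R)" by (rule min_type_ftop_expose)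
  with \<open>expose \<Gamma> R = All q S' T\<close> have "min_type_ftop T" by (simp add: min_type_ftop_All_body)
  with M_TApp.prems show ?case by (simp add: min_type_ftop_subst)
qed

theorem lemma8p2:
  assumes "ftop_term_in_context \<Theta> t"
    and "\<Theta> \<turnstile>\<^sub>M t : T"
  shows "min_type_ftop T"
  using assms mtyping_min_type_ftop
  unfolding ftop_term_in_context_def ftop_env_def by blast

end
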